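(* Let $m\ge1$ be an integer and $Q=\{-m,\dots,m\}^d\subset\mathbb{Z}^d$. Let $\Delta_Q=-2dP_Q+T_Q$ be the operator on $\mathbb{C}^Q$ with $(T_Q)_{x,y}=1$ if $x,y\in Q$ and $|x-y|_1=1$, and $0$ otherwise. Then for all $\beta>0$, $$\frac1{|Q|}\sum_{z\in Q}\big(\exp[\beta\Delta_Q]\big)_{z,z}\ \ge\ \frac{e^{-d\beta/m}}{(2\pi)^d}\int_{[-\pi,\pi]^d}\exp[-\beta\,\omega(k)]\,d^dk,$$ where $\omega(k)=\sum_{\nu=1}^d2\{1-\cos(k_\nu)\}$.
   Context: $|x-y|_1$ is the $\ell^1$ distance on $\mathbb{Z}^d$; $P_Q$ is the identity on $\mathbb{C}^Q$. *)

theory Defs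
  imports "HOL-Analysis.Analysis"
begin

text \<open>Points of Z^d are int^'n with d = CARD('n).\<close>

definition cubeQ :: "nat \<Rightarrow> (int ^ 'n) set" where
  "cubeQ m = {x. \<forall>i. \<bar>x $ i\<bar> \<le> int m}"

definition l1dist :: "int ^ 'n \<Rightarrow> int ^ 'n \<Rightarrow> int" where
  "l1dist x y = (\<Sum>i\<in>UNIV. \<bar>x $ i - y $ i\<bar>)"

definition lapQ :: "nat \<Rightarrow> int ^ 'n \<Rightarrow> int ^ 'n \<Rightarrow> real" where
  "lapQ m x y = (if x \<in> cubeQ m \<and> y \<in> cubeQ m then
      (if x = y then - 2 * real CARD('n) else 0) + (if l1dist x y = 1 then 1 else 0)
    else 0)"

fun matpow :: "'a set \<Rightarrow> ('a \<Rightarrow> 'a \<Rightarrow> real) \<Rightarrow> nat \<Rightarrow> 'a \<Rightarrow> 'a \<Rightarrow> real" where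
  "matpow S A 0 x y = (if x = y then 1 else 0)"
| "matpow S A (Suc n) x y = (\<Sum>w\<in>S. A x w * matpow S A n w y)"

definition matexp :: "'a set \<Rightarrow> ('a \<Rightarrow> 'a \<Rightarrow> real) \<Rightarrow> 'a \<Rightarrow> 'a \<Rightarrow> real" where
  "matexp S A x y = (\<Sum>n. matpow S A n x y / fact n)"

definition omega :: "real ^ 'n \<Rightarrow> real" where
  "omega k = (\<Sum>\<nu>\<in>UNIV. 2 * (1 - cos (k $ \<nu>)))"

end

theory Submission
  imports Defs
begin

text \<open>For a real symmetric matrix \<open>A\<close> and a vector \<open>\<phi>\<close> with \<open>r = \<Sum> \<phi>\<^sup>2\<close>, the spectral theorem
  and Jensen's inequality give \<open>\<langle>\<phi>, e\<^sup>A \<phi>\<rangle> \<ge> r exp (\<langle>\<phi>, A \<phi>\<rangle> / r)\<close>. We avoid diagonalisation: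
  by Cauchy-Schwarz the numbers \<open>h\<^sub>j = \<langle>\<phi>, exp (2\<^sup>-\<^sup>j A) \<phi>\<rangle> / r\<close> satisfy \<open>h\<^sub>j\<^sub>+\<^sub>1\<^sup>2 \<le> h\<^sub>j\<close>, hence
  \<open>h\<^sub>0 \<ge> h\<^sub>j ^ 2\<^sup>j\<close>, while the power series gives \<open>h\<^sub>j \<ge> 1 + 2\<^sup>-\<^sup>j \<langle>\<phi>, A \<phi>\<rangle> / r - O(4\<^sup>-\<^sup>j)\<close>;
  let \<open>j \<rightarrow> \<infinity>\<close>.

  For the plane wave \<open>x \<mapsto> cis (k \<bullet> x)\<close> restricted to \<open>Q\<close> this bounds
  \<open>\<Sum>\<^sub>x\<^sub>,\<^sub>y (e\<^sup>\<beta>\<^sup>\<Delta>)\<^sub>x\<^sub>y cos (k \<bullet> (x - y))\<close> below by \<open>|Q| exp (\<beta> \<langle>cis, \<Delta> cis\<rangle> / |Q|)\<close>. Compared with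
  the free Laplacian, whose plane-wave energy is \<open>-\<omega>(k)\<close> per site, \<open>\<Delta>\<^sub>Q\<close> only loses the bonds leaving
  \<open>Q\<close>; through each of the \<open>2d\<close> faces these start at no more than \<open>|Q| / (2m + 1)\<close> points, so
  \<open>\<langle>cis, \<Delta>\<^sub>Q cis\<rangle> \<ge> -|Q| (\<omega>(k) + d / m)\<close>. Integrating over \<open>k \<in> [-\<pi>, \<pi>]\<^sup>d\<close>, orthogonality of the
  characters leaves \<open>(2\<pi>)\<^sup>d\<close> times the trace of \<open>e\<^sup>\<beta>\<^sup>\<Delta>\<close>.\<close>

section \<open>Powers and exponential of a finite matrix\<close>

lemma matpow_add:
  assumes "finite S" "x \<in> S"
  shows "matpow S A (i + j) x y = (\<Sum>w\<in>S. matpow S A i x w * matpow S A j w y)"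
  using assms(2)
proof (induction i arbitrary: x)
  case 0
  have "(\<Sum>w\<in>S. (if x = w then 1 else 0) * matpow S A j w y) = (\<Sum>w\<in>S. if x = w then matpow S A j w y else 0)"
    by (intro sum.cong) auto
  then show ?case using 0 assms(1) by simp
next
  case (Suc i)
  have "matpow S A (Suc i + j) x y = (\<Sum>w\<in>S. A x w * (\<Sum>u\<in>S. matpow S A i w u * matpow S A j u y))"
    using Suc.IH by (simp cong: sum.cong)
  also have "\<dots> = (\<Sum>u\<in>S. \<Sum>w\<in>S. A x w * matpow S A i w u * matpow S A j u y)"
    by (subst sum.swap) (simp add: sum_distrib_left mult.assoc)
  also have "\<dots> = (\<Sum>u\<in>S. (\<Sum>w\<in>S. A x w * matpow S A i w u) * matpow S A j u y)"
    by (simp add: sum_distrib_right)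
  finally show ?case by simp
qed

lemma matpow_Suc_right:
  assumes "finite S" "x \<in> S" "y \<in> S"
  shows "matpow S A (Suc n) x y = (\<Sum>w\<in>S. matpow S A n x w * A w y)"
proof -
  have "matpow S A (n + 1) x y = (\<Sum>w\<in>S. matpow S A n x w * matpow S A 1 w y)"
    by (rule matpow_add[OF assms(1,2)])
  then show ?thesis using assms by (simp add: if_distrib sum.delta' cong: if_cong)
qed

lemma matpow_sym:
  assumes "finite S" "\<And>x y. x \<in> S \<Longrightarrow> y \<in> S \<Longrightarrow> A x y = A y x" "x \<in> S" "y \<in> S"
  shows "matpow S A n x y = matpow S A n y x"
  using assms(3,4)
proof (induction n arbitrary: x y)
  case 0
  then show ?case by auto
next
  case (Suc n)
  have "matpow S A (Suc n) x y = (\<Sum>w\<in>S. matpow S A n y w * A w x)"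
    using Suc assms(2) by (auto simp: mult.commute intro: sum.cong)
  also have "\<dots> = matpow S A (Suc n) y x"
    using matpow_Suc_right[OF assms(1) Suc.prems(2,1)] by simp
  finally show ?case .
qed

lemma matpow_scale: "matpow S (\<lambda>x y. c * A x y) n x y = c ^ n * matpow S A n x y"
  by (induction n arbitrary: x y) (auto simp: sum_distrib_left algebra_simps)

lemma matpow_exponential_bound:
  assumes "finite S"
  obtains K where "K \<ge> 0" "\<And>x y n. x \<in> S \<Longrightarrow> \<bar>matpow S A n x y\<bar> \<le> K ^ n"
proof
  define B where "B = (\<Sum>x\<in>S. \<Sum>y\<in>S. \<bar>A x y\<bar>)"
  have AB: "\<bar>A x y\<bar> \<le> B" if "x \<in> S" "y \<in> S" for x y
    unfolding B_def using assms that
    by (intro order.trans[OF member_le_sum[of y S] member_le_sum[of x S]]) (auto intro: sum_nonneg)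
  show "real (card S) * B \<ge> 0" by (simp add: B_def sum_nonneg)
  show "\<bar>matpow S A n x y\<bar> \<le> (real (card S) * B) ^ n" if "x \<in> S" for x y n
    using that
  proof (induction n arbitrary: x)
    case (Suc n)
    have "\<bar>matpow S A (Suc n) x y\<bar> \<le> (\<Sum>w\<in>S. \<bar>A x w\<bar> * \<bar>matpow S A n w y\<bar>)"
      by (simp add: abs_mult[symmetric] sum_abs)
    also have "\<dots> \<le> (\<Sum>w\<in>S. B * (real (card S) * B) ^ n)"
      using Suc AB by (intro sum_mono mult_mono) (auto simp: B_def sum_nonneg)
    finally show ?case by (simp add: algebra_simps)
  qed simp
qed

lemma summable_matexp_series:
  assumes "finite S" "x \<in> S"
  shows "summable (\<lambda>n. norm (matpow S A n x y / fact n))"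
proof -
  obtain K where "K \<ge> 0" "\<And>n. \<bar>matpow S A n x y\<bar> \<le> K ^ n"
    using matpow_exponential_bound[OF assms(1)] assms(2) by metis
  then have "norm (norm (matpow S A n x y / fact n)) \<le> inverse (fact n) * K ^ n" for n
    by (simp add: abs_divide divide_right_mono field_simps)
  then show ?thesis
    by (intro summable_comparison_test'[OF summable_exp[of K]])
qed

lemma matexp_sym:
  assumes "finite S" "\<And>x y. x \<in> S \<Longrightarrow> y \<in> S \<Longrightarrow> A x y = A y x" "x \<in> S" "y \<in> S"
  shows "matexp S A x y = matexp S A y x"
  unfolding matexp_def using matpow_sym[OF assms] by simp

lemma sum_inverse_fact_mult_fact:
  "(\<Sum>i\<le>n. 1 / (fact i * fact (n - i)) :: real) = 2 ^ n / fact n"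
proof -
  have "(\<Sum>i\<le>n. 1 / (fact i * fact (n - i)) :: real) = (\<Sum>i\<le>n. real (n choose i)) / fact n"
    by (simp add: sum_divide_distrib binomial_fact field_simps)
  then show ?thesis by (simp flip: of_nat_sum add: choose_row_sum)
qed

lemma matexp_square:
  assumes "finite S" "x \<in> S"
  shows "(\<Sum>w\<in>S. matexp S B x w * matexp S B w y) = matexp S (\<lambda>x y. 2 * B x y) x y"
proof -
  let ?P = "matpow S B"
  let ?c = "\<lambda>w n. \<Sum>i\<le>n. ?P i x w / fact i * (?P (n - i) w y / fact (n - i))"
  have "(\<Sum>w\<in>S. matexp S B x w * matexp S B w y) = (\<Sum>w\<in>S. \<Sum>n. ?c w n)"
    unfolding matexp_def using assms
    by (intro sum.cong refl Cauchy_product summable_matexp_series) auto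
  also have "\<dots> = (\<Sum>n. \<Sum>w\<in>S. ?c w n)"
    using assms by (intro suminf_sum[symmetric] summable_Cauchy_product summable_matexp_series) auto
  also have "\<dots> = (\<Sum>n. matpow S (\<lambda>x y. 2 * B x y) n x y / fact n)"
  proof (rule suminf_cong)
    fix n
    have "(\<Sum>w\<in>S. ?c w n) = (\<Sum>i\<le>n. (\<Sum>w\<in>S. ?P i x w * ?P (n - i) w y) / (fact i * fact (n - i)))"
      by (subst sum.swap) (simp add: sum_divide_distrib mult_ac)
    also have "\<dots> = (\<Sum>i\<le>n. ?P n x y * (1 / (fact i * fact (n - i))))"
    proof (rule sum.cong)
      fix i assume "i \<in> {..n}"
      then show "(\<Sum>w\<in>S. ?P i x w * ?P (n - i) w y) / (fact i * fact (n - i))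
          = ?P n x y * (1 / (fact i * fact (n - i)))"
        using matpow_add[OF assms, of B i "n - i" y] by simp
    qed simp
    also have "\<dots> = ?P n x y * (2 ^ n / fact n)"
      by (simp only: sum_distrib_left[symmetric] sum_inverse_fact_mult_fact)
    finally show "(\<Sum>w\<in>S. ?c w n) = matpow S (\<lambda>x y. 2 * B x y) n x y / fact n"
      by (simp add: matpow_scale)
  qed
  finally show ?thesis unfolding matexp_def .
qed

section \<open>Quadratic forms and a Jensen inequality for the matrix exponential\<close>

definition quad_form :: "'a set \<Rightarrow> ('a \<Rightarrow> 'a \<Rightarrow> real) \<Rightarrow> ('a \<Rightarrow> real) \<Rightarrow> real" where
  "quad_form S M \<phi> = (\<Sum>x\<in>S. \<Sum>y\<in>S. \<phi> x * M x y * \<phi> y)"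

lemma quad_form_eq_0: "(\<And>x. x \<in> S \<Longrightarrow> \<phi> x = 0) \<Longrightarrow> quad_form S M \<phi> = 0"
  unfolding quad_form_def by simp

lemma abs_quad_form_le:
  assumes "\<And>x y. x \<in> S \<Longrightarrow> \<bar>M x y\<bar> \<le> b"
  shows "\<bar>quad_form S M \<phi>\<bar> \<le> b * (\<Sum>x\<in>S. \<bar>\<phi> x\<bar>)\<^sup>2"
proof -
  have "\<bar>quad_form S M \<phi>\<bar> \<le> (\<Sum>x\<in>S. \<Sum>y\<in>S. \<bar>\<phi> x\<bar> * \<bar>M x y\<bar> * \<bar>\<phi> y\<bar>)"
    unfolding quad_form_def
    by (rule order.trans[OF sum_abs sum_mono], rule order.trans[OF sum_abs]) (simp add: abs_mult)
  also have "\<dots> \<le> (\<Sum>x\<in>S. \<Sum>y\<in>S. \<bar>\<phi> x\<bar> * b * \<bar>\<phi> y\<bar>)"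
    using assms by (intro sum_mono mult_right_mono mult_left_mono) auto
  also have "\<dots> = b * (\<Sum>x\<in>S. \<bar>\<phi> x\<bar>)\<^sup>2"
    by (simp add: power2_eq_square sum_distrib_left sum_distrib_right algebra_simps)
  finally show ?thesis .
qed

lemma quad_form_matpow_0:
  assumes "finite S"
  shows "quad_form S (matpow S A 0) \<phi> = (\<Sum>x\<in>S. (\<phi> x)\<^sup>2)"
proof -
  have "quad_form S (matpow S A 0) \<phi> = (\<Sum>x\<in>S. \<Sum>y\<in>S. if y = x then \<phi> x * \<phi> y else 0)"
    unfolding quad_form_def by (intro sum.cong) auto
  then show ?thesis using assms by (simp add: power2_eq_square)
qed

lemma quad_form_matpow_1:
  assumes "finite S"
  shows "quad_form S (matpow S A 1) \<phi> = quad_form S A \<phi>"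
proof -
  have "matpow S A 1 x y = A x y" if "y \<in> S" for x y
  proof -
    have "matpow S A 1 x y = (\<Sum>w\<in>S. if w = y then A x w else 0)"
      by (auto intro!: sum.cong)
    then show ?thesis using assms that by simp
  qed
  then show ?thesis unfolding quad_form_def by (intro sum.cong) auto
qed

lemma sums_quad_form_matexp:
  assumes "finite S"
  shows "(\<lambda>n. quad_form S (matpow S A n) \<phi> / fact n) sums quad_form S (matexp S A) \<phi>"
proof -
  have "(\<lambda>n. \<Sum>x\<in>S. \<Sum>y\<in>S. \<phi> x * (matpow S A n x y / fact n) * \<phi> y) sums
        (\<Sum>x\<in>S. \<Sum>y\<in>S. \<phi> x * matexp S A x y * \<phi> y)"
    unfolding matexp_def using summable_norm_cancel[OF summable_matexp_series[OF assms]]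
    by (intro sums_sum sums_mult sums_mult2 summable_sums) auto
  then show ?thesis unfolding quad_form_def by (simp add: sum_divide_distrib)
qed

lemma quad_form_matexp_square_le:
  assumes S: "finite S" and sym: "\<And>x y. x \<in> S \<Longrightarrow> y \<in> S \<Longrightarrow> B x y = B y x"
  shows "(quad_form S (matexp S B) \<phi>)\<^sup>2
    \<le> (\<Sum>x\<in>S. (\<phi> x)\<^sup>2) * quad_form S (matexp S (\<lambda>x y. 2 * B x y)) \<phi>"
proof -
  define E where "E = matexp S B"
  define u where "u w = (\<Sum>y\<in>S. E w y * \<phi> y)" for w
  have "quad_form S (matexp S (\<lambda>x y. 2 * B x y)) \<phi>
      = (\<Sum>x\<in>S. \<Sum>y\<in>S. \<phi> x * (\<Sum>w\<in>S. E x w * E w y) * \<phi> y)"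
    unfolding quad_form_def E_def using matexp_square[OF S] by simp
  also have "\<dots> = (\<Sum>x\<in>S. \<Sum>w\<in>S. \<Sum>y\<in>S. \<phi> x * E x w * (E w y * \<phi> y))"
    by (simp add: sum_distrib_left sum_distrib_right mult_ac) (rule sum.cong[OF refl], rule sum.swap)
  also have "\<dots> = (\<Sum>w\<in>S. (\<Sum>x\<in>S. \<phi> x * E x w) * (\<Sum>y\<in>S. E w y * \<phi> y))"
    by (subst sum.swap) (simp add: sum_product)
  also have "\<dots> = (\<Sum>w\<in>S. (u w)\<^sup>2)"
  proof (intro sum.cong refl)
    fix w assume w: "w \<in> S"
    have "(\<Sum>x\<in>S. \<phi> x * E x w) = u w"
      unfolding u_def E_def using matexp_sym[OF S sym _ w] by (intro sum.cong) (auto simp: mult.commute)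
    then show "(\<Sum>x\<in>S. \<phi> x * E x w) * (\<Sum>y\<in>S. E w y * \<phi> y) = (u w)\<^sup>2"
      unfolding u_def by (simp add: power2_eq_square)
  qed
  finally have "quad_form S (matexp S (\<lambda>x y. 2 * B x y)) \<phi> = (\<Sum>w\<in>S. (u w)\<^sup>2)" .
  moreover have "quad_form S (matexp S B) \<phi> = (\<Sum>x\<in>S. \<phi> x * u x)"
    unfolding quad_form_def E_def[symmetric] u_def by (simp add: sum_distrib_left mult.assoc)
  ultimately show ?thesis using Cauchy_Schwarz_ineq_sum[of \<phi> u S] by (simp only:)
qed

lemma sums_quad_form_matexp_scaled:
  assumes "finite S"
  shows "(\<lambda>n. t ^ n * quad_form S (matpow S A n) \<phi> / fact n) sums quad_form S (matexp S (\<lambda>x y. t * A x y)) \<phi>"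
proof -
  have "quad_form S (matpow S (\<lambda>x y. t * A x y) n) \<phi> = t ^ n * quad_form S (matpow S A n) \<phi>" for n
    unfolding quad_form_def by (simp add: matpow_scale sum_distrib_left algebra_simps)
  then show ?thesis using sums_quad_form_matexp[OF assms, of "\<lambda>x y. t * A x y" \<phi>] by simp
qed

lemma sums_exp_tail:
  fixes K :: real
  shows "(\<lambda>n. K ^ (n + 2) / fact (n + 2)) sums (exp K - (1 + K))"
  using sums_split_initial_segment[OF exp_converges[of K], of 2]
  by (simp add: numeral_2_eq_2 divide_inverse mult.commute)

lemma quad_form_matexp_scaled_ge:
  assumes S: "finite S"
  obtains C where "\<And>t. 0 \<le> t \<Longrightarrow> t \<le> 1 \<Longrightarrow>
    (\<Sum>x\<in>S. (\<phi> x)\<^sup>2) + t * quad_form S A \<phi> - t\<^sup>2 * C \<le> quad_form S (matexp S (\<lambda>x y. t * A x y)) \<phi>"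
proof -
  obtain K where K: "K \<ge> 0" "\<And>x y n. x \<in> S \<Longrightarrow> \<bar>matpow S A n x y\<bar> \<le> K ^ n"
    using matpow_exponential_bound[OF S] by blast
  define N where "N = (\<Sum>x\<in>S. \<bar>\<phi> x\<bar>)\<^sup>2"
  show ?thesis
  proof (rule that[of "N * exp K"])
    fix t :: real assume t: "0 \<le> t" "t \<le> 1"
    define q where "q n = quad_form S (matpow S A n) \<phi>" for n
    define f where "f n = t ^ n * q n / fact n" for n
    have tail: "(\<lambda>n. f (n + 2)) sums
        (quad_form S (matexp S (\<lambda>x y. t * A x y)) \<phi> - ((\<Sum>x\<in>S. (\<phi> x)\<^sup>2) + t * quad_form S A \<phi>))"
      using sums_split_initial_segment[OF sums_quad_form_matexp_scaled[OF S, where t = t], of 2]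
        quad_form_matpow_0[OF S] quad_form_matpow_1[OF S]
      by (simp add: f_def q_def numeral_2_eq_2)
    have bound: "(\<lambda>n. - (t\<^sup>2 * (N * (K ^ (n + 2) / fact (n + 2))))) sums - (t\<^sup>2 * (N * (exp K - (1 + K))))"
      by (intro sums_minus sums_mult sums_exp_tail)
    have "- (t\<^sup>2 * (N * (K ^ (n + 2) / fact (n + 2)))) \<le> f (n + 2)" for n
    proof -
      have "t ^ (n + 2) \<le> t\<^sup>2"
        using t power_decreasing[of 2 "n + 2" t] by simp
      moreover have "\<bar>q (n + 2)\<bar> \<le> K ^ (n + 2) * N"
        unfolding q_def N_def using K(2) by (rule abs_quad_form_le)
      ultimately have "t ^ (n + 2) * \<bar>q (n + 2)\<bar> / fact (n + 2) \<le> t\<^sup>2 * (K ^ (n + 2) * N) / fact (n + 2)"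
        by (intro divide_right_mono mult_mono) auto
      moreover have "\<bar>f (n + 2)\<bar> = t ^ (n + 2) * \<bar>q (n + 2)\<bar> / fact (n + 2)"
        unfolding f_def using t by (simp add: abs_mult)
      ultimately show ?thesis by (simp add: abs_le_iff mult_ac)
    qed
    then have "- (t\<^sup>2 * (N * (exp K - (1 + K)))) \<le>
        quad_form S (matexp S (\<lambda>x y. t * A x y)) \<phi> - ((\<Sum>x\<in>S. (\<phi> x)\<^sup>2) + t * quad_form S A \<phi>)"
      using bound tail by (rule sums_le)
    moreover have "t\<^sup>2 * (N * (exp K - (1 + K))) \<le> t\<^sup>2 * (N * exp K)"
      using K(1) by (intro mult_left_mono) (auto simp: N_def)
    ultimately show "(\<Sum>x\<in>S. (\<phi> x)\<^sup>2) + t * quad_form S A \<phi> - t\<^sup>2 * (N * exp K)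
        \<le> quad_form S (matexp S (\<lambda>x y. t * A x y)) \<phi>"
      by linarith
  qed
qed

lemma power_two_power_le_of_square_le:
  fixes h :: "nat \<Rightarrow> real"
  assumes "\<And>j. (h (Suc j))\<^sup>2 \<le> h j"
  shows "h j ^ 2 ^ j \<le> h 0"
proof (induction j)
  case (Suc j)
  have "h (Suc j) ^ 2 ^ Suc j = ((h (Suc j))\<^sup>2) ^ 2 ^ j"
    by (simp add: power_mult[symmetric] mult.commute)
  also have "\<dots> \<le> h j ^ 2 ^ j" by (intro power_mono assms) simp
  finally show ?case using Suc by simp
qed simp

lemma exp_le_of_power_two_power_le:
  fixes h :: "nat \<Rightarrow> real"
  assumes power: "\<And>j. h j ^ 2 ^ j \<le> c"
    and lower: "\<And>j. 1 + a / 2 ^ j - D / 4 ^ j \<le> h j"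
  shows "exp a \<le> c"
proof -
  define e :: "nat \<Rightarrow> real" where "e j = inverse (2 ^ j)" for j
  define y where "y j = (a - D * e j) * e j" for j
  have e: "e \<longlonglongrightarrow> 0" unfolding e_def by (rule LIMSEQ_inverse_realpow_zero) simp
  have y_eq: "y j = a / 2 ^ j - D / 4 ^ j" for j
    by (simp add: y_def e_def field_simps flip: power_mult_distrib)
  have "y \<longlonglongrightarrow> (a - D * 0) * 0" unfolding y_def by (intro tendsto_intros e)
  then have "eventually (\<lambda>j. dist (y j) 0 < 1 / 2) sequentially" by (intro tendstoD) simp_all
  then have "eventually (\<lambda>j. exp (2 ^ j * (y j - 2 * (y j)\<^sup>2)) \<le> c) sequentially"
  proof (rule eventually_mono)
    fix j assume "dist (y j) 0 < 1 / 2"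
    then have y: "\<bar>y j\<bar> \<le> 1 / 2" by simp
    then have "y j - 2 * (y j)\<^sup>2 \<le> ln (1 + y j)"
      using abs_ln_one_plus_x_minus_x_bound[OF y] by linarith
    then have "exp (2 ^ j * (y j - 2 * (y j)\<^sup>2)) \<le> exp (real (2 ^ j) * ln (1 + y j))"
      by (simp add: mult_left_mono)
    also have "\<dots> = exp (ln (1 + y j)) ^ 2 ^ j" by (rule exp_of_nat_mult)
    also have "\<dots> = (1 + y j) ^ 2 ^ j" using y by simp
    also have "\<dots> \<le> h j ^ 2 ^ j"
      using lower[of j] y abs_ge_minus_self[of "y j"] by (intro power_mono) (auto simp: y_eq)
    finally show "exp (2 ^ j * (y j - 2 * (y j)\<^sup>2)) \<le> c" using power[of j] by linarith
  qed
  moreover have "(\<lambda>j. exp (2 ^ j * (y j - 2 * (y j)\<^sup>2))) \<longlonglongrightarrow> exp ((a - D * 0) - 2 * (a - D * 0)\<^sup>2 * 0)"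
  proof -
    have "2 ^ j * (y j - 2 * (y j)\<^sup>2) = (a - D * e j) - 2 * (a - D * e j)\<^sup>2 * e j" for j
      by (simp add: y_def e_def power2_eq_square field_simps)
    then show ?thesis by (simp only:) (intro tendsto_intros e)
  qed
  ultimately show ?thesis by (simp add: tendsto_upperbound)
qed

lemma quad_form_matexp_ge:
  fixes \<phi> :: "'a \<Rightarrow> real"
  assumes S: "finite S" and sym: "\<And>x y. x \<in> S \<Longrightarrow> y \<in> S \<Longrightarrow> A x y = A y x"
  defines "r \<equiv> \<Sum>x\<in>S. (\<phi> x)\<^sup>2"
  shows "r * exp (quad_form S A \<phi> / r) \<le> quad_form S (matexp S A) \<phi>"
proof (cases "r = 0")
  case True
  then have "\<phi> x = 0" if "x \<in> S" for x
    using that S unfolding r_def by (subst (asm) sum_nonneg_eq_0_iff) auto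
  then show ?thesis using True quad_form_eq_0[of S \<phi>] by simp
next
  case False
  then have r: "r > 0" unfolding r_def by (simp add: order_less_le sum_nonneg)
  define h where "h j = quad_form S (matexp S (\<lambda>x y. 1 / 2 ^ j * A x y)) \<phi> / r" for j :: nat
  obtain C where C: "\<And>t. 0 \<le> t \<Longrightarrow> t \<le> 1 \<Longrightarrow>
      r + t * quad_form S A \<phi> - t\<^sup>2 * C \<le> quad_form S (matexp S (\<lambda>x y. t * A x y)) \<phi>"
    using quad_form_matexp_scaled_ge[OF S] unfolding r_def by blast
  have "exp (quad_form S A \<phi> / r) \<le> h 0"
  proof (rule exp_le_of_power_two_power_le[OF power_two_power_le_of_square_le])
    fix j
    have "(\<lambda>x y. 2 * (1 / 2 ^ Suc j * A x y)) = (\<lambda>x y. 1 / 2 ^ j * A x y)" by simp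
    then show "(h (Suc j))\<^sup>2 \<le> h j"
      using quad_form_matexp_square_le[OF S, of "\<lambda>x y. 1 / 2 ^ Suc j * A x y" \<phi>] sym r
      unfolding h_def r_def[symmetric] by (simp add: power_divide field_simps power2_eq_square)
    have "(4::real) ^ j = (2 ^ j)\<^sup>2" by (simp add: power2_eq_square flip: power_mult_distrib)
    then have "r + quad_form S A \<phi> / 2 ^ j - C / 4 ^ j \<le> r * h j"
      using C[of "1 / 2 ^ j"] r unfolding h_def by (simp add: power_divide)
    then have "(r + quad_form S A \<phi> / 2 ^ j - C / 4 ^ j) / r \<le> h j"
      using r by (simp add: pos_divide_le_eq mult.commute)
    moreover have "(r + quad_form S A \<phi> / 2 ^ j - C / 4 ^ j) / r
        = 1 + quad_form S A \<phi> / r / 2 ^ j - C / r / 4 ^ j"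
      using r by (simp add: field_simps)
    ultimately show "1 + quad_form S A \<phi> / r / 2 ^ j - C / r / 4 ^ j \<le> h j" by simp
  qed
  then show ?thesis using r unfolding h_def by (simp add: field_simps)
qed

section \<open>The Laplacian of the cube\<close>

definition neighbour :: "int ^ 'n \<Rightarrow> 'n \<Rightarrow> int \<Rightarrow> int ^ 'n" where
  "neighbour x \<nu> \<sigma> = (\<chi> i. if i = \<nu> then x $ i + \<sigma> else x $ i)"

definition of_int_vec :: "int ^ 'n \<Rightarrow> real ^ 'n" where
  "of_int_vec x = (\<chi> i. of_int (x $ i))"

lemma neighbour_nth: "neighbour x \<nu> \<sigma> $ i = (if i = \<nu> then x $ i + \<sigma> else x $ i)"
  unfolding neighbour_def by simp

lemma of_int_vec_diff: "of_int_vec (x - y) = of_int_vec x - of_int_vec y"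
  by (simp add: of_int_vec_def vec_eq_iff)

lemma of_int_vec_eq_0_iff [simp]: "of_int_vec x = 0 \<longleftrightarrow> x = 0"
  by (simp add: of_int_vec_def vec_eq_iff)

lemma inner_of_int_vec_neighbour:
  "k \<bullet> of_int_vec (neighbour x \<nu> \<sigma>) = k \<bullet> of_int_vec x + k $ \<nu> * of_int \<sigma>"
proof -
  have "k \<bullet> of_int_vec (neighbour x \<nu> \<sigma>)
      = (\<Sum>i\<in>UNIV. k $ i * of_int (x $ i) + (if i = \<nu> then k $ \<nu> * of_int \<sigma> else 0))"
    unfolding inner_vec_def of_int_vec_def neighbour_nth by (intro sum.cong) (auto simp: algebra_simps)
  then show ?thesis by (simp add: sum.distrib inner_vec_def of_int_vec_def)
qed

lemma finite_cubeQ: "finite (cubeQ m :: (int ^ 'n) set)"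
proof (rule finite_subset)
  show "cubeQ m \<subseteq> vec_lambda ` (PiE (UNIV :: 'n set) (\<lambda>_. {-int m..int m}))"
  proof
    fix x :: "int ^ 'n" assume "x \<in> cubeQ m"
    then have "(\<lambda>i. x $ i) \<in> PiE UNIV (\<lambda>_. {-int m..int m})"
      unfolding cubeQ_def by (auto simp: abs_le_iff minus_le_iff[of _ "int m"])
    then show "x \<in> vec_lambda ` (PiE UNIV (\<lambda>_. {-int m..int m}))"
      by (metis vec_lambda_eta image_eqI)
  qed
qed (intro finite_imageI finite_PiE; simp)

lemma card_cubeQ_pos: "card (cubeQ m :: (int ^ 'n) set) > 0"
proof -
  have "0 \<in> cubeQ m" unfolding cubeQ_def by simp
  then show ?thesis using finite_cubeQ card_gt_0_iff by blast
qed

lemma l1dist_neighbour: "\<sigma> \<in> {1, -1} \<Longrightarrow> l1dist x (neighbour x \<nu> \<sigma>) = 1"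
  unfolding l1dist_def neighbour_nth by (auto simp: if_distrib cong: if_cong)

lemma l1dist_eq_1_imp_neighbour:
  assumes "l1dist x y = 1"
  obtains \<nu> \<sigma> where "\<sigma> \<in> {1, -1}" "y = neighbour x \<nu> \<sigma>"
proof -
  define d where "d i = \<bar>x $ i - y $ i\<bar>" for i
  have sum_d: "(\<Sum>i\<in>UNIV. d i) = 1" using assms unfolding l1dist_def d_def by simp
  then obtain \<nu> where "d \<nu> \<noteq> 0" by (metis (mono_tags) sum.neutral zero_neq_one)
  then have "1 \<le> d \<nu>" unfolding d_def by linarith
  moreover have "(\<Sum>i\<in>UNIV. d i) = d \<nu> + (\<Sum>i\<in>UNIV - {\<nu>}. d i)" by (simp add: sum.remove)
  moreover have "(\<Sum>i\<in>UNIV - {\<nu>}. d i) \<ge> 0" unfolding d_def by (simp add: sum_nonneg)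
  ultimately have d_nu: "d \<nu> = 1" and "(\<Sum>i\<in>UNIV - {\<nu>}. d i) = 0" using sum_d by linarith+
  then have "d i = 0" if "i \<noteq> \<nu>" for i
    using that by (subst (asm) sum_nonneg_eq_0_iff) (auto simp: d_def)
  then have "y = neighbour x \<nu> (y $ \<nu> - x $ \<nu>)"
    by (auto simp: vec_eq_iff neighbour_nth d_def)
  moreover have "y $ \<nu> - x $ \<nu> \<in> {1, -1}" using d_nu unfolding d_def by (auto simp: abs_if split: if_splits)
  ultimately show ?thesis using that by blast
qed

lemma neighbour_inj:
  assumes "\<sigma> \<in> {1, -1}" "neighbour x \<nu> \<sigma> = neighbour x \<mu> \<tau>"
  shows "\<nu> = \<mu> \<and> \<sigma> = \<tau>"
proof -
  have "neighbour x \<nu> \<sigma> $ \<nu> = neighbour x \<mu> \<tau> $ \<nu>" using assms(2) by simp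
  then show ?thesis using assms(1) by (auto simp: neighbour_nth split: if_splits)
qed

lemma sum_l1dist_eq_1:
  fixes x :: "int ^ 'n"
  assumes S: "finite S"
  shows "(\<Sum>y\<in>S. if l1dist x y = 1 then g y else 0)
       = (\<Sum>\<nu>\<in>UNIV. \<Sum>\<sigma>\<in>{1, -1}. if neighbour x \<nu> \<sigma> \<in> S then g (neighbour x \<nu> \<sigma>) else 0)"
proof -
  define P where "P = (UNIV :: 'n set) \<times> ({1, -1} :: int set)"
  define h where "h y = (if y \<in> S then g y else 0)" for y
  have "finite P" unfolding P_def by simp
  have inj: "inj_on (\<lambda>(\<nu>, \<sigma>). neighbour x \<nu> \<sigma>) P"
    unfolding P_def inj_on_def using neighbour_inj by fastforce
  have img: "(\<lambda>(\<nu>, \<sigma>). neighbour x \<nu> \<sigma>) ` P = {y. l1dist x y = 1}"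
  proof (intro equalityI subsetI)
    fix y assume "y \<in> (\<lambda>(\<nu>, \<sigma>). neighbour x \<nu> \<sigma>) ` P"
    then show "y \<in> {y. l1dist x y = 1}" unfolding P_def using l1dist_neighbour by auto
  next
    fix y assume "y \<in> {y. l1dist x y = 1}"
    then have "l1dist x y = 1" by simp
    then obtain \<nu> \<sigma> where "\<sigma> \<in> {1, -1}" "y = neighbour x \<nu> \<sigma>"
      by (rule l1dist_eq_1_imp_neighbour)
    then show "y \<in> (\<lambda>(\<nu>, \<sigma>). neighbour x \<nu> \<sigma>) ` P" unfolding P_def by force
  qed
  have "(\<Sum>\<nu>\<in>UNIV. \<Sum>\<sigma>\<in>{1, -1}. h (neighbour x \<nu> \<sigma>)) = (\<Sum>(\<nu>, \<sigma>)\<in>P. h (neighbour x \<nu> \<sigma>))"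
    unfolding P_def by (rule sum.cartesian_product)
  also have "\<dots> = (\<Sum>y\<in>{y. l1dist x y = 1}. h y)"
    using sum.reindex[OF inj, of h] img by (simp add: case_prod_beta)
  also have "\<dots> = (\<Sum>y\<in>{y. l1dist x y = 1} \<inter> S. g y)"
    unfolding h_def using img \<open>finite P\<close> by (metis (no_types) finite_imageI sum.inter_restrict)
  also have "\<dots> = (\<Sum>y\<in>S. if l1dist x y = 1 then g y else 0)"
    using sum.inter_restrict[OF S, of g "{y. l1dist x y = 1}"] by (simp add: Int_commute)
  finally show ?thesis unfolding h_def by simp
qed

lemma sum_lapQ_row:
  fixes x :: "int ^ 'n"
  assumes "x \<in> cubeQ m"
  shows "(\<Sum>y\<in>cubeQ m. lapQ m x y * f y) = - 2 * real CARD('n) * f x +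
    (\<Sum>\<nu>\<in>UNIV. \<Sum>\<sigma>\<in>{1, -1}. if neighbour x \<nu> \<sigma> \<in> cubeQ m then f (neighbour x \<nu> \<sigma>) else 0)"
proof -
  have "(\<Sum>y\<in>cubeQ m. lapQ m x y * f y) = (\<Sum>y\<in>cubeQ m.
      (if x = y then - 2 * real CARD('n) * f y else 0) + (if l1dist x y = 1 then f y else 0))"
    using assms unfolding lapQ_def by (intro sum.cong) (auto simp: algebra_simps)
  also have "\<dots> = - 2 * real CARD('n) * f x + (\<Sum>y\<in>cubeQ m. if l1dist x y = 1 then f y else 0)"
    using assms by (simp add: sum.distrib sum.delta'[OF finite_cubeQ])
  finally show ?thesis by (simp only: sum_l1dist_eq_1[OF finite_cubeQ])
qed

lemma lapQ_sym: "lapQ m x y = lapQ m y x"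
  unfolding lapQ_def l1dist_def by (auto simp: abs_minus_commute)

text \<open>The points of \<open>Q\<close> leaving \<open>Q\<close> by the step \<open>\<sigma> e\<^sub>\<nu>\<close> form the face \<open>x\<^sub>\<nu> = \<sigma> m\<close>, and the
  \<open>2 m + 1\<close> translates of that face in direction \<open>-\<sigma> e\<^sub>\<nu>\<close> are disjoint subsets of \<open>Q\<close>.\<close>

lemma card_cubeQ_exits_le:
  fixes \<nu> :: "'n::finite"
  assumes \<sigma>: "\<sigma> \<in> {1, -1}"
  shows "(2 * m + 1) * card {x \<in> cubeQ m. neighbour x \<nu> \<sigma> \<notin> cubeQ m} \<le> card (cubeQ m :: (int ^ 'n) set)"
proof -
  define Q where "Q = (cubeQ m :: (int ^ 'n) set)"
  define F where "F = {x \<in> Q. x $ \<nu> = \<sigma> * int m}"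
  define shift where "shift = (\<lambda>(j::nat, x::int ^ 'n). (\<chi> i. if i = \<nu> then x $ i - \<sigma> * int j else x $ i))"
  have bound: "\<bar>x $ i\<bar> \<le> int m" if "x \<in> Q" for x i using that unfolding Q_def cubeQ_def by auto
  have exits: "{x \<in> Q. neighbour x \<nu> \<sigma> \<notin> Q} \<subseteq> F"
  proof
    fix x assume "x \<in> {x \<in> Q. neighbour x \<nu> \<sigma> \<notin> Q}"
    then have x: "x \<in> Q" and "neighbour x \<nu> \<sigma> \<notin> Q" by auto
    then obtain i where i: "\<bar>neighbour x \<nu> \<sigma> $ i\<bar> > int m" unfolding Q_def cubeQ_def by (auto simp: not_le)
    then have "i = \<nu>" using bound[OF x, of i] by (auto simp: neighbour_nth split: if_splits)
    then have "x $ \<nu> = \<sigma> * int m" using i bound[OF x, of \<nu>] \<sigma> by (auto simp: neighbour_nth abs_if split: if_splits)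
    then show "x \<in> F" unfolding F_def using x by simp
  qed
  have inj: "inj_on shift ({0..2 * m} \<times> F)"
  proof (rule inj_onI, clarify)
    fix j x j' x' assume "x \<in> F" "x' \<in> F" and eq: "shift (j, x) = shift (j', x')"
    then have "x $ \<nu> = x' $ \<nu>" unfolding F_def by simp
    moreover have "x $ i - (if i = \<nu> then \<sigma> * int j else 0) = x' $ i - (if i = \<nu> then \<sigma> * int j' else 0)" for i
      using arg_cong[OF eq, of "\<lambda>z. z $ i"] unfolding shift_def by (auto split: if_splits)
    ultimately have "\<sigma> * int j = \<sigma> * int j'" and "x $ i = x' $ i" for i
      by (metis diff_left_imp_eq, metis diff_zero)
    then show "j = j' \<and> x = x'" using \<sigma> by (auto simp: vec_eq_iff)
  qed
  moreover have img: "shift ` ({0..2 * m} \<times> F) \<subseteq> Q"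
  proof clarify
    fix j x assume j: "j \<in> {0..2 * m}" and x: "x \<in> F"
    have "\<bar>shift (j, x) $ i\<bar> \<le> int m" for i
      using bound[of x i] x j \<sigma> unfolding F_def shift_def by (auto simp: abs_if algebra_simps)
    then show "shift (j, x) \<in> Q" unfolding Q_def cubeQ_def by simp
  qed
  ultimately have "card ({0..2 * m} \<times> F) \<le> card Q"
    unfolding Q_def using finite_cubeQ by (rule card_inj_on_le)
  then have "(2 * m + 1) * card F \<le> card Q" by (simp add: card_cartesian_product)
  moreover have "card {x \<in> Q. neighbour x \<nu> \<sigma> \<notin> Q} \<le> card F"
    using exits by (intro card_mono) (simp_all add: F_def Q_def finite_cubeQ)
  ultimately show ?thesis unfolding Q_def by (meson le_trans mult_le_mono2)
qed

lemma sum_cubeQ_neighbour_mem_ge: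
  fixes \<nu> :: "'n::finite"
  assumes c: "c \<le> 1" and \<sigma>: "\<sigma> \<in> {1, -1}"
  shows "real (card (cubeQ m :: (int ^ 'n) set)) * (c - 1 / (2 * real m + 1))
    \<le> (\<Sum>x\<in>cubeQ m. if neighbour x \<nu> \<sigma> \<in> cubeQ m then c else 0)"
proof -
  define Q where "Q = (cubeQ m :: (int ^ 'n) set)"
  define n where "n = card {x \<in> Q. neighbour x \<nu> \<sigma> \<notin> Q}"
  have finQ: "finite Q" unfolding Q_def by (rule finite_cubeQ)
  have "(\<Sum>x\<in>Q. if neighbour x \<nu> \<sigma> \<in> Q then c else 0) + (\<Sum>x\<in>Q. if neighbour x \<nu> \<sigma> \<notin> Q then c else 0)
      = (\<Sum>x\<in>Q. c)"
    by (subst sum.distrib[symmetric]) (rule sum.cong; simp)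
  moreover have "(\<Sum>x\<in>Q. if neighbour x \<nu> \<sigma> \<notin> Q then c else 0) = n * c"
    unfolding n_def using sum.inter_filter[OF finQ, of "\<lambda>_. c"] by simp
  moreover have "n * c \<le> n" using c by (simp add: mult_left_le)
  moreover have "(2 * m + 1) * n \<le> card Q"
    unfolding n_def Q_def by (rule card_cubeQ_exits_le[OF \<sigma>])
  then have "real ((2 * m + 1) * n) \<le> card Q" by (rule of_nat_mono)
  then have "n \<le> card Q / (2 * m + 1)" by (simp add: field_simps)
  ultimately show ?thesis unfolding Q_def by (simp add: algebra_simps)
qed

lemma sum_lapQ_cos_diff_ge:
  fixes k :: "real ^ 'n"
  assumes m: "m \<ge> 1"
  shows "real (card (cubeQ m :: (int ^ 'n) set)) * (- omega k - real CARD('n) / real m)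
    \<le> (\<Sum>x\<in>cubeQ m. \<Sum>y\<in>cubeQ m. lapQ m x y * cos (k \<bullet> of_int_vec x - k \<bullet> of_int_vec y))"
proof -
  define Q where "Q = (cubeQ m :: (int ^ 'n) set)"
  define N where "N = real (card Q)"
  define d where "d = real CARD('n)"
  let ?inside = "\<lambda>x \<nu> \<sigma>. if neighbour x \<nu> \<sigma> \<in> Q then cos (k $ \<nu>) else 0"
  have step: "cos (k \<bullet> of_int_vec x - k \<bullet> of_int_vec (neighbour x \<nu> \<sigma>)) = cos (k $ \<nu>)"
    if "\<sigma> \<in> {1, -1}" for x \<nu> \<sigma>
    using that unfolding inner_of_int_vec_neighbour by auto
  have "(\<Sum>x\<in>Q. \<Sum>y\<in>Q. lapQ m x y * cos (k \<bullet> of_int_vec x - k \<bullet> of_int_vec y))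
      = (\<Sum>x\<in>Q. - 2 * d + (\<Sum>\<nu>\<in>UNIV. \<Sum>\<sigma>\<in>{1, -1}. ?inside x \<nu> \<sigma>))"
    unfolding Q_def d_def by (intro sum.cong) (simp_all add: sum_lapQ_row step cong: if_cong)
  also have "\<dots> = - 2 * d * N + (\<Sum>\<nu>\<in>UNIV. \<Sum>\<sigma>\<in>{1, -1}. \<Sum>x\<in>Q. ?inside x \<nu> \<sigma>)"
    unfolding N_def by (simp add: sum.distrib sum_subtractf sum.swap[of _ Q])
  also have "\<dots> \<ge> - 2 * d * N + (\<Sum>\<nu>\<in>UNIV. \<Sum>\<sigma>\<in>{1, -1::int}. N * (cos (k $ \<nu>) - 1 / (2 * real m + 1)))"
    unfolding N_def Q_def by (intro add_left_mono sum_mono sum_cubeQ_neighbour_mem_ge) auto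
  moreover have "- 2 * d * N + (\<Sum>\<nu>\<in>UNIV. \<Sum>\<sigma>\<in>{1, -1::int}. N * (cos (k $ \<nu>) - 1 / (2 * real m + 1)))
      = N * (- omega k - d * (2 / (2 * m + 1)))"
    unfolding omega_def d_def by (simp add: sum_subtractf sum_distrib_left algebra_simps)
  moreover have "N * (- omega k - d / m) \<le> N * (- omega k - d * (2 / (2 * m + 1)))"
    using m by (intro mult_left_mono) (auto simp: N_def d_def field_simps)
  ultimately show ?thesis unfolding Q_def N_def d_def by linarith
qed

section \<open>Orthogonality of characters on the torus\<close>

lemma has_integral_indicator_scaleR_UNIV:
  fixes f :: "'a::euclidean_space \<Rightarrow> 'b::banach"
  shows "((\<lambda>x. indicator S x *\<^sub>R f x) has_integral I) UNIV \<longleftrightarrow> (f has_integral I) S"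
  by (simp add: indicator_scaleR_eq_if has_integral_restrict_UNIV)

lemma has_integral_cis_int:
  "((\<lambda>t. cis (t * of_int n)) has_integral (if n = 0 then complex_of_real (2 * pi) else 0)) {-pi..pi}"
proof (cases "n = 0")
  case True
  then show ?thesis
    using has_integral_const_real[of "1::complex" "-pi" pi] by (simp add: scaleR_conv_of_real)
next
  case False
  define F where "F t = cis (t * of_int n) / (\<i> * of_int n)" for t
  have "(F has_vector_derivative cis (t * of_int n)) (at t within {-pi..pi})" for t
  proof -
    have "((\<lambda>t. cis (t * of_int n)) has_derivative (\<lambda>s. (s * of_int n) *\<^sub>R (\<i> * cis (t * of_int n))))
        (at t within {-pi..pi})"
      by (intro has_derivative_cis derivative_eq_intros) auto
    from has_derivative_mult_left[OF this, of "1 / (\<i> * of_int n)"] False show ?thesis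
      unfolding has_vector_derivative_def F_def
      by (simp add: scaleR_conv_of_real field_simps)
  qed
  then have "((\<lambda>t. cis (t * of_int n)) has_integral (F pi - F (-pi))) {-pi..pi}"
    by (intro fundamental_theorem_of_calculus) auto
  moreover have "F pi = F (-pi)"
  proof -
    have "cis (pi * of_int n) = cis (-pi * of_int n) * cis (2 * pi * of_int n)"
      by (simp add: cis_mult algebra_simps)
    then show ?thesis unfolding F_def by simp
  qed
  ultimately show ?thesis using False by simp
qed

lemma
  fixes n :: int
  shows integrable_lborel_cis_int: "integrable lborel (\<lambda>t. indicator {-pi..pi} t *\<^sub>R cis (t * of_int n))"
    and integral_lborel_cis_int:
      "(\<integral>t. indicator {-pi..pi} t *\<^sub>R cis (t * of_int n) \<partial>lborel) = (if n = 0 then complex_of_real (2 * pi) else 0)"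
proof -
  show int: "integrable lborel (\<lambda>t. indicator {-pi..pi} t *\<^sub>R cis (t * of_int n))"
    by (intro borel_integrable_compact continuous_intros) auto
  have "((\<lambda>t. indicator {-pi..pi} t *\<^sub>R cis (t * of_int n)) has_integral
      (\<integral>t. indicator {-pi..pi} t *\<^sub>R cis (t * of_int n) \<partial>lborel)) UNIV"
    by (rule has_integral_integral_lborel[OF int])
  then have "((\<lambda>t. cis (t * of_int n)) has_integral
      (\<integral>t. indicator {-pi..pi} t *\<^sub>R cis (t * of_int n) \<partial>lborel)) {-pi..pi}"
    by (simp only: has_integral_indicator_scaleR_UNIV)
  then show "(\<integral>t. indicator {-pi..pi} t *\<^sub>R cis (t * of_int n) \<partial>lborel) = (if n = 0 then complex_of_real (2 * pi) else 0)"
    using has_integral_cis_int by (rule has_integral_unique)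
qed

lemma integral_lborel_prod_Basis:
  fixes f :: "'a::euclidean_space \<Rightarrow> real \<Rightarrow> complex"
  assumes [measurable]: "\<And>b. b \<in> Basis \<Longrightarrow> f b \<in> borel_measurable borel"
  assumes int: "\<And>b. b \<in> Basis \<Longrightarrow> integrable lborel (f b)"
  shows "(\<integral>x. (\<Prod>b\<in>Basis. f b (x \<bullet> b)) \<partial>(lborel :: 'a measure)) = (\<Prod>b\<in>Basis. \<integral>x. f b x \<partial>lborel)"
proof -
  interpret finite_product_sigma_finite "\<lambda>_. lborel" "Basis :: 'a set" proof qed simp
  have "(\<integral>x. (\<Prod>b\<in>Basis. f b (x \<bullet> b)) \<partial>(lborel :: 'a measure))
      = (\<integral>y. (\<Prod>b\<in>Basis. f b ((\<Sum>b'\<in>Basis. y b' *\<^sub>R b') \<bullet> b)) \<partial>(\<Pi>\<^sub>M b\<in>Basis. lborel))"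
    by (subst lborel_eq) (rule integral_distr; measurable)
  also have "\<dots> = (\<integral>y. (\<Prod>b\<in>Basis. f b (y b)) \<partial>(\<Pi>\<^sub>M b\<in>Basis. lborel))"
    by (intro Bochner_Integration.integral_cong refl prod.cong)
      (simp add: inner_sum_left inner_Basis if_distrib sum.delta cong: if_cong)
  also have "\<dots> = (\<Prod>b\<in>Basis. \<integral>x. f b x \<partial>lborel)"
    by (rule product_integral_prod) (auto intro: int)
  finally show ?thesis .
qed

lemma cis_sum: "finite I \<Longrightarrow> cis (\<Sum>i\<in>I. f i) = (\<Prod>i\<in>I. cis (f i))"
  by (induction I rule: finite_induct) (auto simp: cis_mult[symmetric])

lemma indicator_cbox_prod_Basis:
  "indicator (cbox a b) x = (\<Prod>i\<in>Basis. indicator {a \<bullet> i..b \<bullet> i} (x \<bullet> i) :: real)"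
proof (cases "x \<in> cbox a b")
  case True
  then show ?thesis by (simp add: indicator_def mem_box)
next
  case False
  then obtain i where "i \<in> Basis" "x \<bullet> i \<notin> {a \<bullet> i..b \<bullet> i}" by (auto simp: mem_box)
  then show ?thesis using False by (auto simp: indicator_def intro!: prod_zero)
qed

text \<open>The character \<open>cis (k \<bullet> R)\<close> factors over the coordinates of \<open>k\<close>, so its integral is a
  product of one-dimensional integrals (Fubini on \<open>lborel\<close>).\<close>

lemma has_integral_cis_inner_Ints:
  fixes R lo hi :: "'a::euclidean_space"
  assumes R: "\<And>b. b \<in> Basis \<Longrightarrow> R \<bullet> b \<in> \<int>"
    and lo: "\<And>b. b \<in> Basis \<Longrightarrow> lo \<bullet> b = -pi" and hi: "\<And>b. b \<in> Basis \<Longrightarrow> hi \<bullet> b = pi"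
  shows "((\<lambda>k. cis (k \<bullet> R)) has_integral (if R = 0 then complex_of_real ((2 * pi) ^ DIM('a)) else 0))
    (cbox lo hi)"
proof -
  define n where "n b = \<lfloor>R \<bullet> b\<rfloor>" for b
  have n: "R \<bullet> b = of_int (n b)" if "b \<in> Basis" for b
    using R[OF that] unfolding n_def by (metis Ints_cases floor_of_int)
  define f where "f b t = indicator {-pi..pi} t *\<^sub>R cis (t * of_int (n b))" for b t
  define G where "G k = indicator (cbox lo hi) k *\<^sub>R cis (k \<bullet> R)" for k
  have "cis (k \<bullet> R) = (\<Prod>b\<in>Basis. cis ((k \<bullet> b) * of_int (n b)))" for k
    by (subst euclidean_inner) (simp add: cis_sum n)
  then have G: "G k = (\<Prod>b\<in>Basis. f b (k \<bullet> b))" for k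
    unfolding G_def f_def using lo hi
    by (simp add: indicator_cbox_prod_Basis scaleR_conv_of_real prod.distrib)
  have "(\<integral>k. G k \<partial>lborel) = (\<Prod>b\<in>Basis. \<integral>t. f b t \<partial>lborel)"
    unfolding G
  proof (rule integral_lborel_prod_Basis)
    fix b :: 'a
    show "integrable lborel (f b)" unfolding f_def by (rule integrable_lborel_cis_int)
    then show "f b \<in> borel_measurable borel" using borel_measurable_integrable[of lborel "f b"] by simp
  qed
  also have "\<dots> = (\<Prod>b\<in>(Basis::'a set). if n b = 0 then complex_of_real (2 * pi) else 0)"
    unfolding f_def by (simp add: integral_lborel_cis_int)
  also have "\<dots> = (if R = 0 then complex_of_real ((2 * pi) ^ DIM('a)) else 0)"
  proof (cases "R = 0")
    case True
    then show ?thesis using n by (simp add: prod_constant)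
  next
    case False
    then obtain b where "b \<in> Basis" "R \<bullet> b \<noteq> 0" using euclidean_eq_iff[of R 0] by auto
    then show ?thesis using False n by (auto intro!: prod_zero)
  qed
  finally have "(\<integral>k. G k \<partial>lborel) = (if R = 0 then complex_of_real ((2 * pi) ^ DIM('a)) else 0)" .
  moreover have "integrable lborel G"
    unfolding G_def by (intro borel_integrable_compact continuous_intros) auto
  ultimately have "(G has_integral (if R = 0 then complex_of_real ((2 * pi) ^ DIM('a)) else 0)) UNIV"
    by (metis has_integral_integral_lborel)
  then show ?thesis unfolding G_def by (simp only: has_integral_indicator_scaleR_UNIV)
qed

lemma has_integral_cos_inner_Ints:
  fixes R lo hi :: "'a::euclidean_space"
  assumes "\<And>b. b \<in> Basis \<Longrightarrow> R \<bullet> b \<in> \<int>"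
    and "\<And>b. b \<in> Basis \<Longrightarrow> lo \<bullet> b = -pi" and "\<And>b. b \<in> Basis \<Longrightarrow> hi \<bullet> b = pi"
  shows "((\<lambda>k. cos (k \<bullet> R)) has_integral (if R = 0 then (2 * pi) ^ DIM('a) else 0)) (cbox lo hi)"
  using has_integral_linear[OF has_integral_cis_inner_Ints[OF assms] bounded_linear_Re]
  by (cases "R = 0") (simp_all add: o_def)

section \<open>The plane-wave bound\<close>

lemma has_integral_cos_inner_of_int_vec:
  fixes z :: "int ^ 'n"
  shows "((\<lambda>k::real ^ 'n. cos (k \<bullet> of_int_vec z)) has_integral (if z = 0 then (2 * pi) ^ CARD('n) else 0))
    (cbox (\<chi> i. - pi) (\<chi> i. pi))"
proof -
  have "((\<lambda>k::real ^ 'n. cos (k \<bullet> of_int_vec z)) has_integral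
      (if of_int_vec z = 0 then (2 * pi) ^ DIM(real ^ 'n) else 0)) (cbox (\<chi> i. - pi) (\<chi> i. pi))"
  proof (rule has_integral_cos_inner_Ints)
    fix b :: "real ^ 'n" assume "b \<in> Basis"
    then obtain i where b: "b = axis i 1" unfolding Basis_vec_def by auto
    show "of_int_vec z \<bullet> b \<in> \<int>" "(\<chi> i. - pi) \<bullet> b = - pi" "(\<chi> i. pi) \<bullet> b = pi"
      unfolding b by (simp_all add: inner_axis of_int_vec_def)
  qed
  moreover have "DIM(real ^ 'n) = CARD('n)" by simp
  ultimately show ?thesis by (simp only: of_int_vec_eq_0_iff)
qed

lemma has_integral_sum_cos_inner:
  fixes S :: "(int ^ 'n) set" and M :: "int ^ 'n \<Rightarrow> int ^ 'n \<Rightarrow> real"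
  assumes S: "finite S"
  shows "((\<lambda>k. \<Sum>x\<in>S. \<Sum>y\<in>S. M x y * cos (k \<bullet> of_int_vec x - k \<bullet> of_int_vec y)) has_integral
    ((2 * pi) ^ CARD('n) * (\<Sum>z\<in>S. M z z))) (cbox (\<chi> i. - pi) (\<chi> i. pi))"
proof -
  have "((\<lambda>k. \<Sum>x\<in>S. \<Sum>y\<in>S. M x y * cos (k \<bullet> of_int_vec (x - y))) has_integral
      (\<Sum>x\<in>S. \<Sum>y\<in>S. M x y * (if x - y = 0 then (2 * pi) ^ CARD('n) else 0))) (cbox (\<chi> i. - pi) (\<chi> i. pi))"
    by (intro has_integral_sum S has_integral_mult_right has_integral_cos_inner_of_int_vec)
  moreover have "(\<Sum>x\<in>S. \<Sum>y\<in>S. M x y * (if x - y = 0 then (2 * pi) ^ CARD('n) else 0))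
      = (2 * pi) ^ CARD('n) * (\<Sum>z\<in>S. M z z)"
    using S by (simp add: if_distrib sum.delta cong: if_cong) (simp add: sum_distrib_right[symmetric] mult_ac)
  ultimately show ?thesis by (simp add: of_int_vec_diff inner_diff_right)
qed

lemma exp_perspective_subadditive:
  fixes r1 r2 a1 a2 :: real
  assumes "r1 \<ge> 0" "r2 \<ge> 0" "r1 + r2 > 0" "r1 = 0 \<Longrightarrow> a1 = 0" "r2 = 0 \<Longrightarrow> a2 = 0"
  shows "(r1 + r2) * exp ((a1 + a2) / (r1 + r2)) \<le> r1 * exp (a1 / r1) + r2 * exp (a2 / r2)"
proof (cases "r1 = 0 \<or> r2 = 0")
  case True
  then show ?thesis using assms by auto
next
  case False
  define t where "t = r2 / (r1 + r2)"
  have R: "r1 + r2 \<noteq> 0" using assms(3) by simp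
  then have "1 - t = r1 / (r1 + r2)" unfolding t_def by (simp add: field_simps)
  have t: "0 \<le> t" "t \<le> 1" unfolding t_def using assms by (auto simp: field_simps)
  have "exp ((1 - t) * (a1 / r1) + t * (a2 / r2)) \<le> (1 - t) * exp (a1 / r1) + t * exp (a2 / r2)"
    using convex_onD[OF exp_convex t, of "a1 / r1" "a2 / r2"] by simp
  moreover have "(1 - t) * (a1 / r1) + t * (a2 / r2) = (a1 + a2) / (r1 + r2)"
    unfolding \<open>1 - t = r1 / (r1 + r2)\<close> unfolding t_def using False by (simp add: add_divide_distrib)
  moreover have "(r1 + r2) * ((1 - t) * exp (a1 / r1) + t * exp (a2 / r2)) = r1 * exp (a1 / r1) + r2 * exp (a2 / r2)"
    unfolding \<open>1 - t = r1 / (r1 + r2)\<close> unfolding t_def using R by (simp add: distrib_left)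
  ultimately show ?thesis using assms(3) by (metis mult_le_cancel_left_pos)
qed

text \<open>The quadratic form of the plane wave \<open>cis \<theta>\<close> splits into those of \<open>cos \<theta>\<close> and \<open>sin \<theta>\<close>;
  the two Jensen bounds are recombined by convexity of the perspective \<open>(r, a) \<mapsto> r exp (a / r)\<close>.\<close>

lemma sum_matexp_cos_diff_ge:
  fixes \<theta> :: "'a \<Rightarrow> real"
  assumes S: "finite S" "S \<noteq> {}" and sym: "\<And>x y. x \<in> S \<Longrightarrow> y \<in> S \<Longrightarrow> A x y = A y x"
  shows "real (card S) * exp ((\<Sum>x\<in>S. \<Sum>y\<in>S. A x y * cos (\<theta> x - \<theta> y)) / real (card S))
    \<le> (\<Sum>x\<in>S. \<Sum>y\<in>S. matexp S A x y * cos (\<theta> x - \<theta> y))"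
proof -
  define c where "c x = cos (\<theta> x)" for x
  define s where "s x = sin (\<theta> x)" for x
  have split: "(\<Sum>x\<in>S. \<Sum>y\<in>S. M x y * cos (\<theta> x - \<theta> y)) = quad_form S M c + quad_form S M s" for M
    unfolding quad_form_def c_def s_def by (simp add: sum.distrib[symmetric] cos_diff algebra_simps)
  have norms: "(\<Sum>x\<in>S. (c x)\<^sup>2) + (\<Sum>x\<in>S. (s x)\<^sup>2) = real (card S)"
    unfolding c_def s_def by (simp flip: sum.distrib)
  have vanish: "quad_form S A f = 0" if "(\<Sum>x\<in>S. (f x)\<^sup>2) = 0" for f
    using that S by (intro quad_form_eq_0) (simp add: sum_nonneg_eq_0_iff)
  have "real (card S) * exp ((quad_form S A c + quad_form S A s) / real (card S))
      \<le> (\<Sum>x\<in>S. (c x)\<^sup>2) * exp (quad_form S A c / (\<Sum>x\<in>S. (c x)\<^sup>2))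
        + (\<Sum>x\<in>S. (s x)\<^sup>2) * exp (quad_form S A s / (\<Sum>x\<in>S. (s x)\<^sup>2))"
    unfolding norms[symmetric] using S vanish
    by (intro exp_perspective_subadditive) (auto simp: sum_nonneg norms card_gt_0_iff)
  also have "\<dots> \<le> quad_form S (matexp S A) c + quad_form S (matexp S A) s"
    using S sym by (intro add_mono quad_form_matexp_ge)
  finally show ?thesis unfolding split .
qed

lemma sum_matexp_lapQ_cos_diff_ge:
  fixes k :: "real ^ 'n"
  assumes "m \<ge> 1" and "\<beta> > 0"
  shows "real (card (cubeQ m :: (int ^ 'n) set)) * exp (- real CARD('n) * \<beta> / real m) * exp (- \<beta> * omega k)
    \<le> (\<Sum>x\<in>cubeQ m. \<Sum>y\<in>cubeQ m.
          matexp (cubeQ m) (\<lambda>x y. \<beta> * lapQ m x y) x y * cos (k \<bullet> of_int_vec x - k \<bullet> of_int_vec y))"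
proof -
  define Q where "Q = (cubeQ m :: (int ^ 'n) set)"
  define N where "N = real (card Q)"
  define wave where "wave M = (\<Sum>x\<in>Q. \<Sum>y\<in>Q. M x y * cos (k \<bullet> of_int_vec x - k \<bullet> of_int_vec y))"
    for M :: "int ^ 'n \<Rightarrow> int ^ 'n \<Rightarrow> real"
  have Q: "finite Q" "Q \<noteq> {}" and N: "N > 0"
    using card_cubeQ_pos finite_cubeQ unfolding Q_def N_def by (auto simp: card_gt_0_iff)
  have "N * (- omega k - real CARD('n) / real m) \<le> wave (lapQ m)"
    using sum_lapQ_cos_diff_ge[OF assms(1), of k] unfolding wave_def Q_def N_def .
  moreover have "wave (\<lambda>x y. \<beta> * lapQ m x y) = \<beta> * wave (lapQ m)"
    unfolding wave_def by (simp add: sum_distrib_left mult.assoc)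
  ultimately have "\<beta> * (N * (- omega k - real CARD('n) / real m)) \<le> wave (\<lambda>x y. \<beta> * lapQ m x y)"
    using \<open>\<beta> > 0\<close> by simp
  then have "exp (- real CARD('n) * \<beta> / real m) * exp (- \<beta> * omega k) \<le> exp (wave (\<lambda>x y. \<beta> * lapQ m x y) / N)"
    using N by (simp add: field_simps flip: exp_add)
  also have "N * \<dots> \<le> wave (matexp Q (\<lambda>x y. \<beta> * lapQ m x y))"
    unfolding wave_def N_def using Q lapQ_sym by (intro sum_matexp_cos_diff_ge) auto
  finally show ?thesis using N unfolding wave_def Q_def N_def by (simp add: mult.assoc)
qed

theorem lemma3p5:
  fixes m :: nat and \<beta> :: real
  assumes "m \<ge> 1" and "\<beta> > 0"
  shows "(1 / real (card (cubeQ m :: (int ^ 'n) set))) *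
           (\<Sum>z\<in>(cubeQ m :: (int ^ 'n) set). matexp (cubeQ m) (\<lambda>x y. \<beta> * lapQ m x y) z z)
         \<ge> exp (- real CARD('n) * \<beta> / real m) / (2 * pi) ^ CARD('n) *
           integral (cbox (\<chi> i. - pi) (\<chi> i. pi)) (\<lambda>k :: real ^ 'n. exp (- \<beta> * omega k))"
proof -
  define Q where "Q = (cubeQ m :: (int ^ 'n) set)"
  define N where "N = real (card Q)"
  define E where "E = exp (- real CARD('n) * \<beta> / real m)"
  define B where "B = (cbox (\<chi> i. - pi) (\<chi> i. pi) :: (real ^ 'n) set)"
  define M where "M = matexp Q (\<lambda>x y. \<beta> * lapQ m x y)"
  have "((\<lambda>k. N * E * exp (- \<beta> * omega k)) has_integral (N * E * integral B (\<lambda>k. exp (- \<beta> * omega k)))) B"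
    unfolding B_def omega_def by (intro has_integral_mult_right integrable_integral integrable_continuous continuous_intros)
  moreover have "((\<lambda>k. \<Sum>x\<in>Q. \<Sum>y\<in>Q. M x y * cos (k \<bullet> of_int_vec x - k \<bullet> of_int_vec y)) has_integral
      ((2 * pi) ^ CARD('n) * (\<Sum>z\<in>Q. M z z))) B"
    unfolding B_def Q_def by (intro has_integral_sum_cos_inner finite_cubeQ)
  ultimately have "N * E * integral B (\<lambda>k. exp (- \<beta> * omega k)) \<le> (2 * pi) ^ CARD('n) * (\<Sum>z\<in>Q. M z z)"
    using sum_matexp_lapQ_cos_diff_ge[OF assms] unfolding Q_def N_def E_def M_def by (rule has_integral_le)
  moreover have "N > 0" unfolding N_def Q_def by (simp add: card_cubeQ_pos)
  ultimately show ?thesis unfolding Q_def N_def E_def B_def M_def by (simp add: field_simps)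
qed

end
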